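(* Let $N\geq1$ and let $r$ be an integer with $-(N-1)\leq r\leq N-1$, $r\neq\pm(N-2)$, and $r\neq 4-N$. Let $\hat\rho$ be an $N$-qubit state with Dyson's rank at most $r$, and let $\mathbf n,\mathbf m\in\mathbb R^3$ be orthogonal unit vectors with $\langle\hat J_{\mathbf m}\rangle_{\hat\rho}\neq0$. Then the spin-squeezing coefficient $\xi^2=N(\Delta\hat J_{\mathbf n})^2_{\hat\rho}/\langle\hat J_{\mathbf m}\rangle_{\hat\rho}^2$ satisfies $$\xi^2\geq\frac{8N}{(N+r)^2+12N-1}.$$
   Context: Consider $N$ qubits labelled $1,\dots,N$. For a unit vector $\mathbf n\in\mathbb R^3$, $\hat J_{\mathbf n}=\frac12\sum_{i=1}^N \mathbf n\cdot\hat{\boldsymbol\sigma}^{(i)}$ with $\hat{\boldsymbol\sigma}^{(i)}$ the vector of Pauli matrices of qubit $i$; $(\Delta\hat A)^2_{\hat\rho}=\mathrm{Tr}(\hat\rho\hat A^2)-\mathrm{Tr}(\hat\rho\hat A)^2$ and $\langle\hat A\rangle_{\hat\rho}=\mathrm{Tr}(\hat\rho\hat A)$. A partition $\Lambda=\{A_1,\dots,A_{|\Lambda|}\}$ of $\{1,\dots,N\}$ into nonempty disjoint subsets has subset sizes $N_l=|A_l|$ and $\max\Lambda=\max_lN_l$. A state is $\Lambda$-separable if it equals $\sum_\gamma p_\gamma\hat\rho^{(\gamma)}_{A_1}\otimes\cdots\otimes\hat\rho^{(\gamma)}_{A_{|\Lambda|}}$ for a probability distribution $p_\gamma$ and states $\hat\rho^{(\gamma)}_{A_l}$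 of the qubits in $A_l$. A state has Dyson's rank at most $r$ if it is a convex combination of $\Lambda$-separable states over partitions $\Lambda$ with $\max\Lambda-|\Lambda|\leq r$. *)

theory Defs
  imports "HOL-Analysis.Analysis" "HOL-Library.Disjoint_Sets"
begin

text \<open>Computational basis configurations of the qubits in a set A of labels:
  a configuration assigns a bit to each qubit (False = |0>, True = |1>,
  where |0> is the +1 eigenvector of sigma_z), and is False outside A.\<close>
definition cfgs :: "nat set \<Rightarrow> (nat \<Rightarrow> bool) set" where
  "cfgs A = {x. \<forall>i. i \<notin> A \<longrightarrow> \<not> x i}"

text \<open>Operators on the qubits of A: matrices indexed by configurations in cfgs A.\<close>
type_synonym op = "(nat \<Rightarrow> bool) \<Rightarrow> (nat \<Rightarrow> bool) \<Rightarrow> complex"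

definition restr :: "nat set \<Rightarrow> (nat \<Rightarrow> bool) \<Rightarrow> (nat \<Rightarrow> bool)" where
  "restr A x = (\<lambda>i. i \<in> A \<and> x i)"

definition op_mult :: "nat set \<Rightarrow> op \<Rightarrow> op \<Rightarrow> op" where
  "op_mult A P Q = (\<lambda>x y. \<Sum>z\<in>cfgs A. P x z * Q z y)"

definition op_trace :: "nat set \<Rightarrow> op \<Rightarrow> complex" where
  "op_trace A P = (\<Sum>x\<in>cfgs A. P x x)"

definition is_state :: "nat set \<Rightarrow> op \<Rightarrow> bool" where
  "is_state A \<rho> \<longleftrightarrow>
     (\<forall>x\<in>cfgs A. \<forall>y\<in>cfgs A. \<rho> x y = cnj (\<rho> y x)) \<and>
     (\<forall>v :: (nat \<Rightarrow> bool) \<Rightarrow> complex.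
        0 \<le> Re (\<Sum>x\<in>cfgs A. \<Sum>y\<in>cfgs A. cnj (v x) * \<rho> x y * v y)) \<and>
     op_trace A \<rho> = 1"

definition tensor_prod :: "nat set set \<Rightarrow> (nat set \<Rightarrow> op) \<Rightarrow> op" where
  "tensor_prod \<Lambda> \<sigma> = (\<lambda>x y. \<Prod>B\<in>\<Lambda>. \<sigma> B (restr B x) (restr B y))"

definition is_partition :: "nat \<Rightarrow> nat set set \<Rightarrow> bool" where
  "is_partition N \<Lambda> \<longleftrightarrow> partition_on {1..N} \<Lambda>"

definition separable :: "nat \<Rightarrow> nat set set \<Rightarrow> op \<Rightarrow> bool" where
  "separable N \<Lambda> \<rho> \<longleftrightarrow>
     (\<exists>(K::nat) (p::nat \<Rightarrow> real) (\<sigma>::nat \<Rightarrow> nat set \<Rightarrow> op).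
        (\<forall>k<K. 0 \<le> p k) \<and> (\<Sum>k<K. p k) = 1 \<and>
        (\<forall>k<K. \<forall>B\<in>\<Lambda>. is_state B (\<sigma> k B)) \<and>
        (\<forall>x\<in>cfgs {1..N}. \<forall>y\<in>cfgs {1..N}.
            \<rho> x y = (\<Sum>k<K. complex_of_real (p k) * tensor_prod \<Lambda> (\<sigma> k) x y)))"

definition dyson_part :: "nat set set \<Rightarrow> int" where
  "dyson_part \<Lambda> = int (Max (card ` \<Lambda>)) - int (card \<Lambda>)"

definition dyson_rank_le :: "nat \<Rightarrow> int \<Rightarrow> op \<Rightarrow> bool" where
  "dyson_rank_le N r \<rho> \<longleftrightarrow>
     (\<exists>(K::nat) (q::nat \<Rightarrow> real) (\<Lambda>::nat \<Rightarrow> nat set set) (\<rho>s::nat \<Rightarrow> op).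
        (\<forall>k<K. 0 \<le> q k) \<and> (\<Sum>k<K. q k) = 1 \<and>
        (\<forall>k<K. is_partition N (\<Lambda> k) \<and> dyson_part (\<Lambda> k) \<le> r \<and>
               separable N (\<Lambda> k) (\<rho>s k)) \<and>
        (\<forall>x\<in>cfgs {1..N}. \<forall>y\<in>cfgs {1..N}.
            \<rho> x y = (\<Sum>k<K. complex_of_real (q k) * \<rho>s k x y)))"

text \<open>Single-qubit matrix element <a| n.sigma |b>.\<close>
definition pauli_n :: "real^3 \<Rightarrow> bool \<Rightarrow> bool \<Rightarrow> complex" where
  "pauli_n n a b =
     (if \<not> a \<and> \<not> b then complex_of_real (n$3)
      else if a \<and> b then - complex_of_real (n$3)
      else if \<not> a \<and> b then Complex (n$1) (- (n$2))
      else Complex (n$1) (n$2))"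

text \<open>Collective spin J_n = 1/2 sum_{i=1..N} n.sigma^(i) on N qubits.\<close>
definition J_op :: "nat \<Rightarrow> real^3 \<Rightarrow> op" where
  "J_op N n = (\<lambda>x y. (1/2) * (\<Sum>i\<in>{1..N}.
      pauli_n n (x i) (y i) * (if (\<forall>j\<in>{1..N}. j \<noteq> i \<longrightarrow> x j = y j) then 1 else 0)))"

text \<open>Expectation Tr(rho A) (real for Hermitian rho, A) and variance.\<close>
definition expect :: "nat \<Rightarrow> op \<Rightarrow> op \<Rightarrow> real" where
  "expect N \<rho> A = Re (op_trace {1..N} (op_mult {1..N} \<rho> A))"

definition variance :: "nat \<Rightarrow> op \<Rightarrow> op \<Rightarrow> real" where
  "variance N \<rho> A = expect N \<rho> (op_mult {1..N} A A) - (expect N \<rho> A)^2"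

end

(* Pick a single-qubit frame in which n.sigma is diagonal and m.sigma is the bit flip (this
   uses n \<bottom> m: the two Pauli operators anticommute).  In the product frame J_n is diagonal,
   with the magnetization D(x) as eigenvalue, and J_m is half the sum of the single-qubit flips.
   For a product state over the blocks of a partition the diagonal weights are u(x)^2 with
   u \<ge> 0 and \<Sum> u^2 = 1, and the off-diagonal entries are bounded by u(x) u(x').  Flipping
   qubit i changes D by \<plusminus>1, so every flip term is a commutator with J_n - \<mu>; together with
   2ab \<le> a^2 + b^2 this gives
     t <J_m> \<le> <(J_n - \<mu>)^2> + t^2 \<Sum>_B N_B (N_B + 2) / 8,
   where flip terms of different blocks do not interact.  The inequality is affine in the state,
   hence survives mixing, and for max \<Lambda> - |\<Lambda>| \<le> r the block sizes satisfy
   \<Sum>_B N_B (N_B + 2) / 8 \<le> ((N + r)^2 + 12 N - 1) / 32 as long as r \<noteq> 4 - N.  Taking \<mu> = <J_n>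
   and the optimal t yields the bound. *)

theory Submission
  imports Defs
begin

lemma finite_cfgs: "finite A \<Longrightarrow> finite (cfgs A)"
proof -
  assume "finite A"
  have "cfgs A \<subseteq> (\<lambda>S i. i \<in> S) ` Pow A"
  proof
    fix x assume "x \<in> cfgs A"
    then have "x = (\<lambda>i. i \<in> {j. x j})" "{j. x j} \<in> Pow A" by (auto simp: cfgs_def)
    then show "x \<in> (\<lambda>S i. i \<in> S) ` Pow A" by blast
  qed
  then show ?thesis using \<open>finite A\<close> by (meson finite_Pow_iff finite_imageI finite_subset)
qed

lemma cfgs_empty: "cfgs {} = {\<lambda>_. False}"
  by (auto simp: cfgs_def)

lemma cfgs_singleton: "cfgs {a} = {\<lambda>_. False, (\<lambda>_. False)(a := True)}"
  by (auto simp: cfgs_def fun_eq_iff)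

lemma restr_in_cfgs [simp]: "restr B x \<in> cfgs B"
  by (auto simp: restr_def cfgs_def)

lemma bij_betw_sup_cfgs:
  assumes "A \<inter> C = {}"
  shows "bij_betw (\<lambda>(y, z). sup y z) (cfgs A \<times> cfgs C) (cfgs (A \<union> C))"
proof (rule bij_betw_byWitness[where f' = "\<lambda>x. (restr A x, restr C x)"])
  show "\<forall>p\<in>cfgs A \<times> cfgs C. (\<lambda>x. (restr A x, restr C x)) ((\<lambda>(y, z). sup y z) p) = p"
    using assms by (auto simp: cfgs_def restr_def fun_eq_iff)
  show "\<forall>x\<in>cfgs (A \<union> C). (\<lambda>(y, z). sup y z) (restr A x, restr C x) = x"
    by (auto simp: cfgs_def restr_def fun_eq_iff)
  show "(\<lambda>(y, z). sup y z) ` (cfgs A \<times> cfgs C) \<subseteq> cfgs (A \<union> C)"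
    by (auto simp: cfgs_def)
  show "(\<lambda>x. (restr A x, restr C x)) ` cfgs (A \<union> C) \<subseteq> cfgs A \<times> cfgs C"
    by auto
qed

lemma sum_cfgs_Un:
  assumes "A \<inter> C = {}"
  shows "(\<Sum>x\<in>cfgs (A \<union> C). g x) = (\<Sum>y\<in>cfgs A. \<Sum>z\<in>cfgs C. g (sup y z))"
  by (simp add: sum.reindex_bij_betw[OF bij_betw_sup_cfgs[OF assms], symmetric]
      sum.cartesian_product case_prod_beta)

lemma sum_cfgs_prod_blocks:
  fixes f :: "nat set \<Rightarrow> (nat \<Rightarrow> bool) \<Rightarrow> 'c::comm_semiring_1"
  assumes "finite L" "disjoint L"
  shows "(\<Sum>x\<in>cfgs (\<Union>L). \<Prod>B\<in>L. f B (restr B x)) = (\<Prod>B\<in>L. \<Sum>y\<in>cfgs B. f B y)"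
  using assms
proof (induction L rule: finite_induct)
  case empty
  then show ?case by (simp add: cfgs_empty)
next
  case (insert B0 L)
  have disj: "B0 \<inter> \<Union>L = {}"
    using insert.hyps(2) insert.prems by (auto simp: pairwise_insert disjnt_def)
  have "restr B0 (sup y z) = y" if "y \<in> cfgs B0" "z \<in> cfgs (\<Union>L)" for y z
    using that disj by (auto simp: cfgs_def restr_def fun_eq_iff)
  moreover have "restr B (sup y z) = restr B z" if "y \<in> cfgs B0" "B \<in> L" for B y z
    using that disj by (auto simp: cfgs_def restr_def fun_eq_iff)
  ultimately have "(\<Sum>x\<in>cfgs (\<Union>(insert B0 L)). \<Prod>B\<in>insert B0 L. f B (restr B x))
      = (\<Sum>y\<in>cfgs B0. \<Sum>z\<in>cfgs (\<Union>L). f B0 y * (\<Prod>B\<in>L. f B (restr B z)))"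
    using insert.hyps by (auto simp: sum_cfgs_Un[OF disj] intro!: sum.cong prod.cong)
  also have "\<dots> = (\<Sum>y\<in>cfgs B0. f B0 y) * (\<Prod>B\<in>L. \<Sum>y\<in>cfgs B. f B y)"
    using insert.IH insert.prems by (simp add: sum_product[symmetric] pairwise_insert)
  finally show ?case using insert.hyps by simp
qed

lemma sum_cfgs_prod:
  fixes f :: "nat \<Rightarrow> bool \<Rightarrow> 'c::comm_semiring_1"
  assumes "finite A"
  shows "(\<Sum>x\<in>cfgs A. \<Prod>i\<in>A. f i (x i)) = (\<Prod>i\<in>A. f i False + f i True)"
proof -
  let ?L = "(\<lambda>i. {i}) ` A"
  have "disjoint ?L"
    by (auto simp: pairwise_def disjnt_def)
  then have "(\<Sum>x\<in>cfgs (\<Union>?L). \<Prod>B\<in>?L. f (the_elem B) (restr B x (the_elem B)))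
      = (\<Prod>B\<in>?L. \<Sum>y\<in>cfgs B. f (the_elem B) (y (the_elem B)))"
    using assms by (intro sum_cfgs_prod_blocks) auto
  moreover have "(\<Sum>y\<in>cfgs {i}. f i (y i)) = f i False + f i True" for i
    by (simp add: cfgs_singleton fun_eq_iff)
  ultimately show ?thesis
    by (simp add: prod.reindex restr_def)
qed

definition flip :: "nat \<Rightarrow> (nat \<Rightarrow> bool) \<Rightarrow> nat \<Rightarrow> bool" where
  "flip i x = x(i := \<not> x i)"

lemma flip_flip [simp]: "flip i (flip i x) = x"
  by (auto simp: flip_def)

lemma flip_in_cfgs: "i \<in> A \<Longrightarrow> x \<in> cfgs A \<Longrightarrow> flip i x \<in> cfgs A"
  by (auto simp: flip_def cfgs_def)

lemma sum_cfgs_flip: "i \<in> A \<Longrightarrow> (\<Sum>x\<in>cfgs A. g (flip i x)) = (\<Sum>x\<in>cfgs A. g x)"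
  by (rule sum.reindex_bij_witness[where i = "flip i" and j = "flip i"]) (auto simp: flip_in_cfgs)

lemma restr_apply [simp]: "i \<in> B \<Longrightarrow> restr B x i = x i"
  by (simp add: restr_def)

lemma restr_flip: "restr B (flip i x) = (if i \<in> B then flip i (restr B x) else restr B x)"
  by (auto simp: restr_def flip_def fun_eq_iff)

section \<open>A single-qubit frame adapted to two orthogonal directions\<close>

definition spin :: "bool \<Rightarrow> 'a::ring_1" where
  "spin b = (if b then -1 else 1)"

definition pauli_apply :: "real^3 \<Rightarrow> (bool \<Rightarrow> complex) \<Rightarrow> bool \<Rightarrow> complex" where
  "pauli_apply n v a = pauli_n n a False * v False + pauli_n n a True * v True"

definition qubit_inner :: "(bool \<Rightarrow> complex) \<Rightarrow> (bool \<Rightarrow> complex) \<Rightarrow> complex" where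
  "qubit_inner u v = cnj (u False) * v False + cnj (u True) * v True"

definition unitary_qubit :: "(bool \<Rightarrow> bool \<Rightarrow> complex) \<Rightarrow> bool" where
  "unitary_qubit U \<longleftrightarrow>
     (\<forall>a a'. U a False * cnj (U a' False) + U a True * cnj (U a' True) = of_bool (a = a'))"

text \<open>\<open>U a b\<close> is the \<open>a\<close>-th computational coordinate of the frame vector labelled \<open>b\<close>.\<close>
definition pauli_frame :: "real^3 \<Rightarrow> real^3 \<Rightarrow> (bool \<Rightarrow> bool \<Rightarrow> complex) \<Rightarrow> bool" where
  "pauli_frame n m U \<longleftrightarrow> unitary_qubit U \<and>
     (\<forall>b. pauli_apply n (\<lambda>a. U a b) = (\<lambda>a. spin b * U a b)) \<and>
     (\<forall>b. pauli_apply m (\<lambda>a. U a b) = (\<lambda>a. U a (\<not> b)))"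

lemma pauli_n_components:
  "pauli_n n = (\<lambda>a b. if \<not> a \<and> \<not> b then of_real (n$3) else if a \<and> b then - of_real (n$3)
      else if \<not> a \<and> b then of_real (n$1) - \<i> * of_real (n$2) else of_real (n$1) + \<i> * of_real (n$2))"
  by (auto simp: pauli_n_def Complex_eq fun_eq_iff)

lemma inner_vec3: "(n::real^3) \<bullet> m = n$1 * m$1 + n$2 * m$2 + n$3 * m$3"
  by (simp add: inner_vec_def sum_3)

lemma unit_vec3:
  fixes n :: "real^3"
  assumes "norm n = 1"
  shows "of_real (n$1) * of_real (n$1) + of_real (n$2) * of_real (n$2)
    + of_real (n$3) * of_real (n$3) = (1::complex)"
proof -
  have "n$1 * n$1 + n$2 * n$2 + n$3 * n$3 = 1"
    using assms by (simp add: norm_eq_1 inner_vec3[symmetric])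
  then show ?thesis by (metis of_real_1 of_real_add of_real_mult)
qed

lemma pauli_apply_pauli_apply:
  assumes "norm n = 1"
  shows "pauli_apply n (pauli_apply n v) = v"
  using unit_vec3[OF assms]
  by (auto simp: fun_eq_iff pauli_apply_def pauli_n_components) (insert i_squared, algebra)+

lemma pauli_apply_anticommute:
  fixes n m :: "real^3"
  assumes "n \<bullet> m = 0"
  shows "pauli_apply n (pauli_apply m v) = (\<lambda>a. - pauli_apply m (pauli_apply n v) a)"
proof -
  have "n$1 * m$1 + n$2 * m$2 + n$3 * m$3 = 0"
    using assms by (simp add: inner_vec3)
  then have "of_real (n$1) * of_real (m$1) + of_real (n$2) * of_real (m$2)
      + of_real (n$3) * of_real (m$3) = (0::complex)"
    by (metis of_real_0 of_real_add of_real_mult)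
  then show ?thesis
    by (auto simp: fun_eq_iff pauli_apply_def pauli_n_components) (insert i_squared, algebra)+
qed

lemma qubit_inner_pauli_apply: "qubit_inner u (pauli_apply n v) = qubit_inner (pauli_apply n u) v"
  by (simp add: qubit_inner_def pauli_apply_def pauli_n_components algebra_simps)

lemma left_inverse_imp_right_inverse_2x2:
  fixes a b c d A B C D :: complex
  assumes "A * a + B * b = 1" "C * c + D * d = 1" "A * c + B * d = 0" "C * a + D * b = 0"
  shows "a * A + c * C = 1" "b * B + d * D = 1" "a * B + c * D = 0" "b * A + d * C = 0"
  using assms by algebra+

lemma qubit_inner_eigenvector_anticommuting:
  fixes n m :: "real^3"
  assumes "n \<bullet> m = 0" "pauli_apply n v = v"
  shows "qubit_inner v (pauli_apply m v) = 0"
proof -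
  have "qubit_inner v (pauli_apply m v) = qubit_inner v (pauli_apply m (pauli_apply n v))"
    by (simp add: assms(2))
  also have "\<dots> = - qubit_inner v (pauli_apply n (pauli_apply m v))"
    by (simp add: pauli_apply_anticommute[OF assms(1)] qubit_inner_def)
  also have "\<dots> = - qubit_inner v (pauli_apply m v)"
    by (simp add: qubit_inner_pauli_apply assms(2))
  finally show ?thesis by simp
qed

lemma pauli_frame_from_eigenvector:
  fixes n m :: "real^3"
  assumes n: "norm n = 1" and m: "norm m = 1" and nm: "n \<bullet> m = 0"
    and v_unit: "qubit_inner v v = 1" and v_eigen: "pauli_apply n v = v"
  shows "\<exists>U. pauli_frame n m U"
proof -
  define w where "w = pauli_apply m v"
  have w_eigen: "pauli_apply n w = (\<lambda>a. - w a)"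
    unfolding w_def pauli_apply_anticommute[OF nm] v_eigen ..
  have m_w: "pauli_apply m w = v"
    unfolding w_def pauli_apply_pauli_apply[OF m] ..
  have w_unit: "qubit_inner w w = 1"
    using v_unit by (simp add: w_def qubit_inner_pauli_apply[symmetric] m_w[unfolded w_def])
  have vw: "qubit_inner v w = 0"
    unfolding w_def using nm v_eigen by (rule qubit_inner_eigenvector_anticommuting)
  have "qubit_inner w v = cnj (qubit_inner v w)"
    by (simp add: qubit_inner_def mult.commute)
  with vw have wv: "qubit_inner w v = 0" by simp
  note columns = v_unit w_unit vw wv
  note rows = left_inverse_imp_right_inverse_2x2[OF columns[unfolded qubit_inner_def]]
  have "unitary_qubit (\<lambda>a b. if b then w a else v a)"
    unfolding unitary_qubit_def
  proof (intro allI)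
    fix a a' :: bool
    show "(if False then w a else v a) * cnj (if False then w a' else v a')
        + (if True then w a else v a) * cnj (if True then w a' else v a') = of_bool (a = a')"
      using rows by (cases a; cases a') simp_all
  qed
  then have "pauli_frame n m (\<lambda>a b. if b then w a else v a)"
    using v_eigen w_eigen m_w by (auto simp: pauli_frame_def spin_def fun_eq_iff w_def)
  then show ?thesis by blast
qed

lemma pauli_eigenvector_exists_nonneg:
  fixes n :: "real^3"
  assumes n: "norm n = 1" and n3: "0 \<le> n$3"
  shows "\<exists>v. qubit_inner v v = 1 \<and> pauli_apply n v = v"
proof -
  define N1 N2 N3 where "N1 = complex_of_real (n$1)" "N2 = complex_of_real (n$2)"
    "N3 = complex_of_real (n$3)"
  have hn: "N1 * N1 + N2 * N2 + N3 * N3 = 1"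
    using unit_vec3[OF n] by (simp add: N1_N2_N3_def)
  define s where "s = sqrt ((1 + n$3) / 2)"
  have s: "s > 0" "2 * s * s = 1 + n$3"
    using n3 by (auto simp: s_def mult.assoc)
  define S T where "S = complex_of_real s" "T = complex_of_real (1 / (2 * s))"
  have ST: "2 * S * T = 1" "2 * S * S = 1 + N3"
    using arg_cong[OF s(2), of complex_of_real] s(1) by (simp_all add: S_T_def N1_N2_N3_def)
  define v where "v a = (if a then (N1 + \<i> * N2) * T else S)" for a
  have "qubit_inner v v = S * S + (N1 - \<i> * N2) * (N1 + \<i> * N2) * (T * T)"
    by (simp add: qubit_inner_def v_def S_T_def N1_N2_N3_def algebra_simps)
  also have "\<dots> = 1"
    using ST hn i_squared by algebra
  finally have "qubit_inner v v = 1" .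
  moreover have "pauli_apply n v = v"
    unfolding fun_eq_iff pauli_apply_def pauli_n_components v_def N1_N2_N3_def[symmetric]
    using ST hn by (intro allI, case_tac x) (simp_all, (insert i_squared, algebra)+)
  ultimately show ?thesis by blast
qed

lemma pauli_eigenvector_exists_neg:
  fixes n :: "real^3"
  assumes n: "norm n = 1" and n3: "n$3 < 0"
  shows "\<exists>v. qubit_inner v v = 1 \<and> pauli_apply n v = v"
proof -
  define N1 N2 N3 where "N1 = complex_of_real (n$1)" "N2 = complex_of_real (n$2)"
    "N3 = complex_of_real (n$3)"
  have hn: "N1 * N1 + N2 * N2 + N3 * N3 = 1"
    using unit_vec3[OF n] by (simp add: N1_N2_N3_def)
  define s where "s = sqrt ((1 - n$3) / 2)"
  have s: "s > 0" "2 * s * s = 1 - n$3"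
    using n3 by (auto simp: s_def mult.assoc)
  define S T where "S = complex_of_real s" "T = complex_of_real (1 / (2 * s))"
  have ST: "2 * S * T = 1" "2 * S * S = 1 - N3"
    using arg_cong[OF s(2), of complex_of_real] s(1) by (simp_all add: S_T_def N1_N2_N3_def)
  define v where "v a = (if a then S else (N1 - \<i> * N2) * T)" for a
  have "qubit_inner v v = (N1 + \<i> * N2) * (N1 - \<i> * N2) * (T * T) + S * S"
    by (simp add: qubit_inner_def v_def S_T_def N1_N2_N3_def algebra_simps)
  also have "\<dots> = 1"
    using ST hn i_squared by algebra
  finally have "qubit_inner v v = 1" .
  moreover have "pauli_apply n v = v"
    unfolding fun_eq_iff pauli_apply_def pauli_n_components v_def N1_N2_N3_def[symmetric]
    using ST hn by (intro allI, case_tac x) (simp_all, (insert i_squared, algebra)+)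
  ultimately show ?thesis by blast
qed

lemma pauli_frame_exists:
  fixes n m :: "real^3"
  assumes "norm n = 1" "norm m = 1" "n \<bullet> m = 0"
  obtains U where "pauli_frame n m U"
  using pauli_eigenvector_exists_nonneg[OF assms(1)] pauli_eigenvector_exists_neg[OF assms(1)]
    pauli_frame_from_eigenvector[OF assms] by (cases "0 \<le> n$3") auto

section \<open>Collective spins in a product eigenbasis\<close>

type_synonym ket = "(nat \<Rightarrow> bool) \<Rightarrow> complex"

text \<open>The product frame vector labelled by the configuration \<open>x\<close>, evaluated at the
  computational configuration \<open>z\<close>.\<close>
definition basis_vec :: "(bool \<Rightarrow> bool \<Rightarrow> complex) \<Rightarrow> nat set \<Rightarrow> (nat \<Rightarrow> bool) \<Rightarrow> ket" where
  "basis_vec U A x z = (\<Prod>i\<in>A. U (z i) (x i))"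

definition op_apply :: "nat set \<Rightarrow> op \<Rightarrow> ket \<Rightarrow> ket" where
  "op_apply A M v w = (\<Sum>z\<in>cfgs A. M w z * v z)"

definition op_form :: "nat set \<Rightarrow> op \<Rightarrow> ket \<Rightarrow> ket \<Rightarrow> complex" where
  "op_form A \<rho> v w = (\<Sum>z\<in>cfgs A. \<Sum>y\<in>cfgs A. cnj (v z) * \<rho> z y * w y)"

definition J_on :: "nat set \<Rightarrow> real^3 \<Rightarrow> op" where
  "J_on A n = (\<lambda>x y. (1/2) * (\<Sum>i\<in>A.
      pauli_n n (x i) (y i) * (if \<forall>j\<in>A. j \<noteq> i \<longrightarrow> x j = y j then 1 else 0)))"

definition magnetization :: "nat set \<Rightarrow> (nat \<Rightarrow> bool) \<Rightarrow> real" where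
  "magnetization A x = (1/2) * (\<Sum>i\<in>A. spin (x i))"

lemma J_op_eq_J_on: "J_op N n = J_on {1..N} n"
  by (simp add: J_op_def J_on_def)

lemma op_apply_cong:
  "(\<And>z. z \<in> cfgs A \<Longrightarrow> v z = v' z) \<Longrightarrow> op_apply A M v w = op_apply A M v' w"
  unfolding op_apply_def by (intro sum.cong refl) simp

lemma op_form_cong:
  "(\<And>w. w \<in> cfgs A \<Longrightarrow> f w = g w) \<Longrightarrow> op_form A \<rho> v f = op_form A \<rho> v g"
  unfolding op_form_def by (intro sum.cong refl) simp

lemma op_form_scale: "op_form A \<rho> v (\<lambda>w. c * f w) = c * op_form A \<rho> v f"
  unfolding op_form_def by (simp add: sum_distrib_left mult_ac)

lemma op_form_sum:
  "op_form A \<rho> v (\<lambda>w. \<Sum>i\<in>I. f i w) = (\<Sum>i\<in>I. op_form A \<rho> v (f i))"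
  unfolding op_form_def by (simp add: sum_distrib_left sum.swap[of _ I])

lemma op_apply_op_mult: "op_apply A (op_mult A M M') v w = op_apply A M (op_apply A M' v) w"
proof -
  have "op_apply A (op_mult A M M') v w = (\<Sum>z\<in>cfgs A. \<Sum>y\<in>cfgs A. M w y * (M' y z * v z))"
    unfolding op_apply_def op_mult_def by (simp add: sum_distrib_left sum_distrib_right mult_ac)
  also have "\<dots> = op_apply A M (op_apply A M' v) w"
    unfolding op_apply_def by (subst sum.swap) (simp add: sum_distrib_left)
  finally show ?thesis .
qed

lemma basis_vec_completeness:
  assumes "finite A" "unitary_qubit U" "w \<in> cfgs A" "z \<in> cfgs A"
  shows "(\<Sum>x\<in>cfgs A. basis_vec U A x w * cnj (basis_vec U A x z)) = of_bool (w = z)"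
proof -
  have "(\<Sum>x\<in>cfgs A. basis_vec U A x w * cnj (basis_vec U A x z))
      = (\<Prod>i\<in>A. U (w i) False * cnj (U (z i) False) + U (w i) True * cnj (U (z i) True))"
    unfolding basis_vec_def cnj_prod prod.distrib[symmetric] by (rule sum_cfgs_prod[OF assms(1)])
  also have "\<dots> = (\<Prod>i\<in>A. of_bool (w i = z i))"
    using assms(2) by (simp add: unitary_qubit_def)
  also have "\<dots> = of_bool (\<forall>i\<in>A. w i = z i)"
    using assms(1) by (induction A rule: finite_induct) auto
  also have "\<dots> = of_bool (w = z)"
    using assms(3,4) by (auto simp: cfgs_def fun_eq_iff)
  finally show ?thesis .
qed

lemma op_form_op_apply: "op_form A \<rho> v (op_apply A M w) = op_form A (op_mult A \<rho> M) v w"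
  unfolding op_form_def op_apply_def op_mult_def
  by (simp add: sum_distrib_left sum_distrib_right mult_ac, rule sum.cong[OF refl], rule sum.swap)

lemma trace_eq_sum_op_form:
  assumes "finite A" "unitary_qubit U"
  shows "op_trace A P = (\<Sum>x\<in>cfgs A. op_form A P (basis_vec U A x) (basis_vec U A x))"
proof -
  have "(\<Sum>x\<in>cfgs A. op_form A P (basis_vec U A x) (basis_vec U A x))
      = (\<Sum>z\<in>cfgs A. \<Sum>y\<in>cfgs A. P z y * (\<Sum>x\<in>cfgs A. basis_vec U A x y * cnj (basis_vec U A x z)))"
    unfolding op_form_def sum_distrib_left
    by (subst sum.swap, rule sum.cong[OF refl], subst sum.swap) (simp add: mult_ac)
  also have "\<dots> = op_trace A P"
    using assms finite_cfgs[OF assms(1)] by (simp add: basis_vec_completeness op_trace_def)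
  finally show ?thesis ..
qed

lemma trace_in_eigenbasis:
  assumes "finite A" "unitary_qubit U"
    and "\<And>x w. w \<in> cfgs A \<Longrightarrow> op_apply A M (basis_vec U A x) w = c x * basis_vec U A x w"
  shows "op_trace A (op_mult A \<rho> M) = (\<Sum>x\<in>cfgs A. c x * op_form A \<rho> (basis_vec U A x) (basis_vec U A x))"
  using assms
  by (simp add: trace_eq_sum_op_form[OF assms(1,2)] op_form_op_apply[symmetric] op_form_scale
      cong: op_form_cong)

lemma cfgs_agreeing_off:
  assumes "w \<in> cfgs A" "i \<in> A"
  shows "cfgs A \<inter> {z. \<forall>j\<in>A. j \<noteq> i \<longrightarrow> w j = z j} = {w(i := False), w(i := True)}"
proof (intro equalityI subsetI)
  fix z assume "z \<in> cfgs A \<inter> {z. \<forall>j\<in>A. j \<noteq> i \<longrightarrow> w j = z j}"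
  then have "z = w(i := z i)"
    using assms(1) by (auto simp: cfgs_def fun_eq_iff)
  then show "z \<in> {w(i := False), w(i := True)}"
    by (cases "z i") auto
qed (use assms in \<open>auto simp: cfgs_def split: if_splits\<close>)

lemma sum_cfgs_agreeing_off:
  fixes g :: "(nat \<Rightarrow> bool) \<Rightarrow> 'a::semiring_1"
  assumes "finite A" "w \<in> cfgs A" "i \<in> A"
  shows "(\<Sum>z\<in>cfgs A. g z * of_bool (\<forall>j\<in>A. j \<noteq> i \<longrightarrow> w j = z j)) = g (w(i := False)) + g (w(i := True))"
  unfolding sum_mult_of_bool_eq[OF finite_cfgs[OF assms(1)]] cfgs_agreeing_off[OF assms(2,3)]
  by (simp add: fun_eq_iff)

lemma basis_vec_upd:
  assumes "finite A" "i \<in> A"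
  shows "basis_vec U A x (w(i := b)) = U b (x i) * (\<Prod>j\<in>A - {i}. U (w j) (x j))"
  unfolding basis_vec_def prod.remove[OF assms] by (auto intro!: prod.cong)

lemma basis_vec_flip:
  assumes "finite A" "i \<in> A"
  shows "basis_vec U A (flip i x) w = U (w i) (\<not> x i) * (\<Prod>j\<in>A - {i}. U (w j) (x j))"
  unfolding basis_vec_def prod.remove[OF assms] by (auto simp: flip_def intro!: prod.cong)

lemma op_apply_J_on_basis_vec:
  assumes "finite A" "w \<in> cfgs A"
  shows "op_apply A (J_on A n) (basis_vec U A x) w
    = (1/2) * (\<Sum>i\<in>A. pauli_apply n (\<lambda>a. U a (x i)) (w i) * (\<Prod>j\<in>A - {i}. U (w j) (x j)))"
proof -
  have "op_apply A (J_on A n) (basis_vec U A x) w = (1/2) * (\<Sum>i\<in>A. \<Sum>z\<in>cfgs A.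
      pauli_n n (w i) (z i) * basis_vec U A x z * of_bool (\<forall>j\<in>A. j \<noteq> i \<longrightarrow> w j = z j))"
    unfolding op_apply_def J_on_def
    by (simp add: sum_distrib_left sum_distrib_right sum.swap[of _ "cfgs A"] mult_ac of_bool_def)
  also have "\<dots> = (1/2) * (\<Sum>i\<in>A. \<Sum>b\<in>UNIV. pauli_n n (w i) b * basis_vec U A x (w(i := b)))"
    using assms by (intro arg_cong[where f = "\<lambda>t. _ * t"] sum.cong refl) (simp add: sum_cfgs_agreeing_off UNIV_bool)
  also have "\<dots> = (1/2) * (\<Sum>i\<in>A. pauli_apply n (\<lambda>a. U a (x i)) (w i) * (\<Prod>j\<in>A - {i}. U (w j) (x j)))"
    using assms(1) by (simp add: basis_vec_upd pauli_apply_def UNIV_bool algebra_simps)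
  finally show ?thesis .
qed

lemma of_real_spin [simp]: "of_real (spin b) = spin b"
  by (simp add: spin_def)

lemma J_on_basis_vec_eigen:
  assumes "finite A" "pauli_frame n m U" "w \<in> cfgs A"
  shows "op_apply A (J_on A n) (basis_vec U A x) w = of_real (magnetization A x) * basis_vec U A x w"
proof -
  have "pauli_apply n (\<lambda>a. U a (x i)) (w i) * (\<Prod>j\<in>A - {i}. U (w j) (x j))
      = spin (x i) * basis_vec U A x w" if "i \<in> A" for i
    using assms(2) basis_vec_upd[OF assms(1) that, of U x w "w i"] by (simp add: pauli_frame_def)
  then show ?thesis
    using assms(1,3)
    by (simp add: op_apply_J_on_basis_vec magnetization_def sum_distrib_right)
qed

lemma J_on_basis_vec_flip:
  assumes "finite A" "pauli_frame n m U" "w \<in> cfgs A"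
  shows "op_apply A (J_on A m) (basis_vec U A x) w = (1/2) * (\<Sum>i\<in>A. basis_vec U A (flip i x) w)"
proof -
  have "pauli_apply m (\<lambda>a. U a (x i)) (w i) = U (w i) (\<not> x i)" for i
    using assms(2) by (simp add: pauli_frame_def)
  then show ?thesis
    using assms(1,3) by (simp add: op_apply_J_on_basis_vec basis_vec_flip)
qed

lemma pauli_frame_unitary: "pauli_frame n m U \<Longrightarrow> unitary_qubit U"
  by (simp add: pauli_frame_def)

lemma J_on_square_basis_vec_eigen:
  assumes "finite A" "pauli_frame n m U" "w \<in> cfgs A"
  shows "op_apply A (op_mult A (J_on A n) (J_on A n)) (basis_vec U A x) w
    = (of_real (magnetization A x))\<^sup>2 * basis_vec U A x w"
proof -
  note eigen = J_on_basis_vec_eigen[OF assms(1,2)]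
  let ?c = "complex_of_real (magnetization A x)"
  have "op_apply A (op_mult A (J_on A n) (J_on A n)) (basis_vec U A x) w
      = op_apply A (J_on A n) (\<lambda>z. ?c * basis_vec U A x z) w"
    unfolding op_apply_op_mult by (rule op_apply_cong) (simp add: eigen)
  also have "\<dots> = ?c * op_apply A (J_on A n) (basis_vec U A x) w"
    by (simp add: op_apply_def sum_distrib_left mult_ac)
  finally show ?thesis
    using assms(3) by (simp add: eigen power2_eq_square)
qed

lemma traces_in_product_basis:
  assumes "finite A" "pauli_frame n m U"
  defines "e \<equiv> basis_vec U A"
  shows "op_trace A (op_mult A \<rho> (J_on A n))
      = (\<Sum>x\<in>cfgs A. of_real (magnetization A x) * op_form A \<rho> (e x) (e x))"
    and "op_trace A (op_mult A \<rho> (op_mult A (J_on A n) (J_on A n)))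
      = (\<Sum>x\<in>cfgs A. (of_real (magnetization A x))\<^sup>2 * op_form A \<rho> (e x) (e x))"
    and "op_trace A (op_mult A \<rho> (J_on A m))
      = (1/2) * (\<Sum>x\<in>cfgs A. \<Sum>i\<in>A. op_form A \<rho> (e x) (e (flip i x)))"
proof -
  note unitary = pauli_frame_unitary[OF assms(2)]
  show "op_trace A (op_mult A \<rho> (J_on A n))
      = (\<Sum>x\<in>cfgs A. of_real (magnetization A x) * op_form A \<rho> (e x) (e x))"
    unfolding e_def using assms(1) unitary J_on_basis_vec_eigen[OF assms(1,2)]
    by (rule trace_in_eigenbasis)
  show "op_trace A (op_mult A \<rho> (op_mult A (J_on A n) (J_on A n)))
      = (\<Sum>x\<in>cfgs A. (of_real (magnetization A x))\<^sup>2 * op_form A \<rho> (e x) (e x))"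
    unfolding e_def using assms(1) unitary J_on_square_basis_vec_eigen[OF assms(1,2)]
    by (rule trace_in_eigenbasis)
  have "op_trace A (op_mult A \<rho> (J_on A m))
      = (\<Sum>x\<in>cfgs A. op_form A \<rho> (e x) (op_apply A (J_on A m) (e x)))"
    by (simp add: trace_eq_sum_op_form[OF assms(1) unitary] op_form_op_apply e_def)
  also have "\<dots> = (\<Sum>x\<in>cfgs A. op_form A \<rho> (e x) (\<lambda>w. (1/2) * (\<Sum>i\<in>A. e (flip i x) w)))"
    unfolding e_def by (intro sum.cong refl op_form_cong J_on_basis_vec_flip[OF assms(1,2)])
  finally show "op_trace A (op_mult A \<rho> (J_on A m))
      = (1/2) * (\<Sum>x\<in>cfgs A. \<Sum>i\<in>A. op_form A \<rho> (e x) (e (flip i x)))"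
    by (simp only: op_form_scale op_form_sum sum_distrib_left)
qed

section \<open>A variational inequality for amplitudes on configurations\<close>

lemma spin_flip_self [simp]: "spin (flip i x i) = - spin (x i)"
  by (simp add: flip_def spin_def)

lemma spin_mult_self [simp]: "spin b * spin b = 1"
  by (simp add: spin_def)

lemma magnetization_flip:
  assumes "finite A" "i \<in> A"
  shows "magnetization A x - magnetization A (flip i x) = spin (x i)"
proof -
  have "(\<Sum>j\<in>A - {i}. spin (flip i x j)) = (\<Sum>j\<in>A - {i}. spin (x j) :: real)"
    by (intro sum.cong) (auto simp: flip_def)
  then show ?thesis
    unfolding magnetization_def sum.remove[OF assms] by (simp add: field_simps)
qed

text \<open>Flipping qubit \<open>i\<close> changes the magnetization by \<open>spin (x i)\<close>, so each flip term is a
  commutator with \<open>J\<^sub>n - \<mu>\<close>.\<close>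
lemma sum_flip_product:
  fixes u :: "(nat \<Rightarrow> bool) \<Rightarrow> real"
  assumes "finite A" "i \<in> A"
  shows "(\<Sum>x\<in>cfgs A. u x * u (flip i x))
    = 2 * (\<Sum>x\<in>cfgs A. spin (x i) * (magnetization A x - \<mu>) * u x * u (flip i x))"
proof -
  define T where "T x = spin (x i) * (magnetization A x - \<mu>) * u x * u (flip i x)" for x
  have "u x * u (flip i x) = T x + T (flip i x)" for x
    using magnetization_flip[OF assms, of x] by (simp add: T_def algebra_simps)
  then have "(\<Sum>x\<in>cfgs A. u x * u (flip i x)) = (\<Sum>x\<in>cfgs A. T x) + (\<Sum>x\<in>cfgs A. T (flip i x))"
    by (simp only: sum.distrib)
  then show ?thesis
    unfolding sum_cfgs_flip[OF assms(2), of T] by (simp add: T_def)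
qed

lemma spin_mult_le:
  fixes a b :: real
  assumes "0 \<le> a" "0 \<le> b"
  shows "spin s * a * (spin t * b) \<le> of_bool (s = t) * (a\<^sup>2 + b\<^sup>2) / 2"
proof (cases "s = t")
  case True
  have "0 \<le> (a - b)\<^sup>2" by simp
  then show ?thesis using True by (simp add: power2_eq_square algebra_simps)
next
  case False
  then show ?thesis using assms by (cases s; cases t) (simp_all add: spin_def)
qed

lemma signed_sum_square_le:
  fixes a :: "nat \<Rightarrow> real"
  assumes "\<forall>i\<in>B. 0 \<le> a i"
  shows "(\<Sum>i\<in>B. spin (c i) * a i)\<^sup>2 \<le> (\<Sum>i\<in>B. \<Sum>j\<in>B. of_bool (c i = c j) * (a i)\<^sup>2)"
proof -
  have "(\<Sum>i\<in>B. spin (c i) * a i)\<^sup>2 = (\<Sum>i\<in>B. \<Sum>j\<in>B. spin (c i) * a i * (spin (c j) * a j))"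
    by (simp add: power2_eq_square sum_product)
  also have "\<dots> \<le> (\<Sum>i\<in>B. \<Sum>j\<in>B. of_bool (c i = c j) * ((a i)\<^sup>2 + (a j)\<^sup>2) / 2)"
    using assms by (intro sum_mono spin_mult_le) auto
  also have "\<dots> = (\<Sum>i\<in>B. \<Sum>j\<in>B. of_bool (c i = c j) * (a i)\<^sup>2) / 2
      + (\<Sum>i\<in>B. \<Sum>j\<in>B. of_bool (c i = c j) * (a j)\<^sup>2) / 2"
    by (simp add: add_divide_distrib distrib_left sum.distrib sum_divide_distrib)
  also have "(\<Sum>i\<in>B. \<Sum>j\<in>B. of_bool (c i = c j) * (a j)\<^sup>2) = (\<Sum>i\<in>B. \<Sum>j\<in>B. of_bool (c i = c j) * (a i)\<^sup>2)"
    by (subst sum.swap) (simp add: eq_commute)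
  finally show ?thesis by simp
qed

lemma count_diagonal_or_unequal_le:
  fixes y :: "'a \<Rightarrow> bool"
  assumes "finite B"
  shows "(\<Sum>i\<in>B. \<Sum>j\<in>B. of_bool (i = j \<or> y i \<noteq> y j)) \<le> real (card B) + (real (card B))\<^sup>2 / 2"
proof -
  define p q where "p = card {j\<in>B. y j}" "q = card {j\<in>B. \<not> y j}"
  have pq: "p + q = card B"
    using assms unfolding p_q_def by (subst card_Un_disjoint[symmetric]) (auto intro: arg_cong[where f = card])
  have "(\<Sum>j\<in>B. of_bool (i = j \<or> y i \<noteq> y j)) = 1 + (if y i then real q else real p)" if "i \<in> B" for i
  proof -
    have "B \<inter> {j. i = j \<or> y i \<noteq> y j} = insert i (if y i then {j\<in>B. \<not> y j} else {j\<in>B. y j})"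
      using that by auto
    moreover have "i \<notin> (if y i then {j\<in>B. \<not> y j} else {j\<in>B. y j})"
      by auto
    ultimately show ?thesis
      using assms by (simp only: sum_of_bool_eq[OF assms]) (simp add: p_q_def)
  qed
  then have "(\<Sum>i\<in>B. \<Sum>j\<in>B. of_bool (i = j \<or> y i \<noteq> y j)) = (\<Sum>i\<in>B. 1 + (if y i then real q else real p))"
    by (intro sum.cong) auto
  also have "\<dots> = real (card B) + 2 * real p * real q"
  proof -
    have "B \<inter> {j. y j} = {j\<in>B. y j}" "B \<inter> - {j. y j} = {j\<in>B. \<not> y j}" by auto
    then show ?thesis using assms by (simp add: sum.distrib sum.If_cases p_q_def)
  qed
  also have "\<dots> \<le> real (card B) + (real (card B))\<^sup>2 / 2"
  proof -
    have "0 \<le> (real p - real q)\<^sup>2" by simp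
    then show ?thesis
      unfolding pq[symmetric] of_nat_add by (simp add: power2_eq_square algebra_simps)
  qed
  finally show ?thesis .
qed

definition flip_sum :: "((nat \<Rightarrow> bool) \<Rightarrow> real) \<Rightarrow> nat set \<Rightarrow> (nat \<Rightarrow> bool) \<Rightarrow> real" where
  "flip_sum u B x = (\<Sum>i\<in>B. spin (x i) * u (flip i x))"

definition flips_uncorrelated :: "nat set \<Rightarrow> nat set set \<Rightarrow> ((nat \<Rightarrow> bool) \<Rightarrow> real) \<Rightarrow> bool" where
  "flips_uncorrelated A L u \<longleftrightarrow> (\<forall>B\<in>L. \<forall>B'\<in>L. B \<noteq> B' \<longrightarrow> (\<forall>i\<in>B. \<forall>j\<in>B'.
     (\<Sum>x\<in>cfgs A. spin (x i) * u (flip i x) * (spin (x j) * u (flip j x))) = 0))"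

definition block_weight :: "nat set set \<Rightarrow> real" where
  "block_weight L = (\<Sum>B\<in>L. real (card B) * (real (card B) + 2) / 8)"

lemma sum_flip_sum_square_le:
  assumes "finite A" "B \<subseteq> A" "\<forall>x\<in>cfgs A. 0 \<le> u x"
  shows "(\<Sum>x\<in>cfgs A. (flip_sum u B x)\<^sup>2)
    \<le> (real (card B) + (real (card B))\<^sup>2 / 2) * (\<Sum>x\<in>cfgs A. (u x)\<^sup>2)"
proof -
  have finB: "finite B" using assms(1,2) by (rule finite_subset[rotated])
  have "(\<Sum>x\<in>cfgs A. (flip_sum u B x)\<^sup>2)
      \<le> (\<Sum>x\<in>cfgs A. \<Sum>i\<in>B. \<Sum>j\<in>B. of_bool (x i = x j) * (u (flip i x))\<^sup>2)"
    unfolding flip_sum_def using assms(2,3)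
    by (intro sum_mono signed_sum_square_le) (auto intro: flip_in_cfgs)
  also have "\<dots> = (\<Sum>i\<in>B. \<Sum>j\<in>B. \<Sum>x\<in>cfgs A. of_bool (x i = x j) * (u (flip i x))\<^sup>2)"
    by (simp add: sum.swap[of _ "cfgs A"])
  also have "\<dots> = (\<Sum>i\<in>B. \<Sum>j\<in>B. \<Sum>y\<in>cfgs A. of_bool (i = j \<or> y i \<noteq> y j) * (u y)\<^sup>2)"
  proof (rule sum.cong[OF refl], rule sum.cong[OF refl])
    fix i j assume "i \<in> B" "j \<in> B"
    then have "(\<Sum>x\<in>cfgs A. of_bool (x i = x j) * (u (flip i x))\<^sup>2)
        = (\<Sum>y\<in>cfgs A. of_bool (flip i y i = flip i y j) * (u y)\<^sup>2)"
      using assms(2) sum_cfgs_flip[of i A "\<lambda>x. of_bool (x i = x j) * (u (flip i x))\<^sup>2"] by auto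
    also have "\<dots> = (\<Sum>y\<in>cfgs A. of_bool (i = j \<or> y i \<noteq> y j) * (u y)\<^sup>2)"
      by (intro sum.cong refl) (auto simp: flip_def)
    finally show "(\<Sum>x\<in>cfgs A. of_bool (x i = x j) * (u (flip i x))\<^sup>2)
        = (\<Sum>y\<in>cfgs A. of_bool (i = j \<or> y i \<noteq> y j) * (u y)\<^sup>2)" .
  qed
  also have "\<dots> = (\<Sum>y\<in>cfgs A. (u y)\<^sup>2 * (\<Sum>i\<in>B. \<Sum>j\<in>B. of_bool (i = j \<or> y i \<noteq> y j)))"
    by (simp add: sum_distrib_left sum.swap[of _ "cfgs A"] mult.commute)
  also have "\<dots> \<le> (\<Sum>y\<in>cfgs A. (u y)\<^sup>2 * (real (card B) + (real (card B))\<^sup>2 / 2))"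
    by (intro sum_mono mult_left_mono count_diagonal_or_unequal_le[OF finB]) simp
  finally show ?thesis
    by (simp add: sum_distrib_right mult.commute)
qed

lemma sum_flip_sum_square_blocks:
  assumes "finite A" "partition_on A L" "flips_uncorrelated A L u"
  shows "(\<Sum>x\<in>cfgs A. (flip_sum u A x)\<^sup>2) = (\<Sum>B\<in>L. \<Sum>x\<in>cfgs A. (flip_sum u B x)\<^sup>2)"
proof -
  have finL: "finite L"
    using finite_elements[OF assms(1,2)] .
  have split: "flip_sum u A x = (\<Sum>B\<in>L. flip_sum u B x)" for x
    unfolding flip_sum_def by (rule sum.partition[OF assms(1,2)])
  have off: "(\<Sum>x\<in>cfgs A. flip_sum u B x * flip_sum u B' x) = 0"
    if "B \<in> L" "B' \<in> L" "B \<noteq> B'" for B B'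
  proof -
    have "(\<Sum>x\<in>cfgs A. flip_sum u B x * flip_sum u B' x)
        = (\<Sum>i\<in>B. \<Sum>j\<in>B'. \<Sum>x\<in>cfgs A. spin (x i) * u (flip i x) * (spin (x j) * u (flip j x)))"
      unfolding flip_sum_def sum_product by (subst sum.swap, rule sum.cong[OF refl], rule sum.swap)
    then show ?thesis
      using assms(3) that by (simp add: flips_uncorrelated_def)
  qed
  have "(\<Sum>x\<in>cfgs A. (flip_sum u A x)\<^sup>2)
      = (\<Sum>B\<in>L. \<Sum>B'\<in>L. \<Sum>x\<in>cfgs A. flip_sum u B x * flip_sum u B' x)"
    by (simp add: split power2_eq_square sum_product sum.swap[of _ "cfgs A"])
  also have "\<dots> = (\<Sum>B\<in>L. \<Sum>x\<in>cfgs A. flip_sum u B x * flip_sum u B x)"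
  proof (rule sum.cong[OF refl])
    fix B assume B: "B \<in> L"
    have "(\<Sum>B'\<in>L - {B}. \<Sum>x\<in>cfgs A. flip_sum u B x * flip_sum u B' x) = 0"
      using off B by (intro sum.neutral) auto
    then show "(\<Sum>B'\<in>L. \<Sum>x\<in>cfgs A. flip_sum u B x * flip_sum u B' x)
        = (\<Sum>x\<in>cfgs A. flip_sum u B x * flip_sum u B x)"
      by (simp add: sum.remove[OF finL B])
  qed
  finally show ?thesis by (simp add: power2_eq_square)
qed

lemma sum_flip_sum_square_le_block_weight:
  assumes "finite A" "partition_on A L" "\<forall>x\<in>cfgs A. 0 \<le> u x" "flips_uncorrelated A L u"
  shows "(\<Sum>x\<in>cfgs A. (flip_sum u A x)\<^sup>2) \<le> 4 * block_weight L * (\<Sum>x\<in>cfgs A. (u x)\<^sup>2)"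
proof -
  have "(\<Sum>x\<in>cfgs A. (flip_sum u A x)\<^sup>2)
      \<le> (\<Sum>B\<in>L. (real (card B) + (real (card B))\<^sup>2 / 2) * (\<Sum>x\<in>cfgs A. (u x)\<^sup>2))"
    using assms(1-3)
    by (simp only: sum_flip_sum_square_blocks[OF assms(1,2,4)], intro sum_mono sum_flip_sum_square_le)
      (auto simp: partition_on_def)
  also have "\<dots> = 4 * block_weight L * (\<Sum>x\<in>cfgs A. (u x)\<^sup>2)"
  proof -
    have eq: "real (card B) + (real (card B))\<^sup>2 / 2 = 4 * (real (card B) * (real (card B) + 2) / 8)"
      for B :: "nat set"
      by (simp add: power2_eq_square field_simps)
    show ?thesis
      by (simp only: eq block_weight_def sum_distrib_right[symmetric] sum_distrib_left[symmetric])
  qed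
  finally show ?thesis .
qed

lemma flip_correlation_bound:
  fixes u :: "(nat \<Rightarrow> bool) \<Rightarrow> real"
  assumes "finite A" "partition_on A L" "\<forall>x\<in>cfgs A. 0 \<le> u x" "flips_uncorrelated A L u" "0 \<le> t"
  shows "t / 2 * (\<Sum>x\<in>cfgs A. \<Sum>i\<in>A. u x * u (flip i x))
    \<le> (\<Sum>x\<in>cfgs A. (magnetization A x - \<mu>)\<^sup>2 * (u x)\<^sup>2) + t\<^sup>2 * block_weight L * (\<Sum>x\<in>cfgs A. (u x)\<^sup>2)"
proof -
  let ?d = "\<lambda>x. magnetization A x - \<mu>"
  have "(\<Sum>x\<in>cfgs A. \<Sum>i\<in>A. u x * u (flip i x))
      = (\<Sum>i\<in>A. 2 * (\<Sum>x\<in>cfgs A. spin (x i) * ?d x * u x * u (flip i x)))"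
    using assms(1) by (subst sum.swap) (intro sum.cong refl sum_flip_product)
  also have "\<dots> = 2 * (\<Sum>x\<in>cfgs A. ?d x * u x * flip_sum u A x)"
    by (simp add: flip_sum_def sum_distrib_left sum.swap[of _ A] mult_ac)
  finally have "t / 2 * (\<Sum>x\<in>cfgs A. \<Sum>i\<in>A. u x * u (flip i x))
      = (\<Sum>x\<in>cfgs A. (?d x * u x) * (t * flip_sum u A x))"
    by (simp add: sum_distrib_left mult_ac)
  also have "\<dots> \<le> (\<Sum>x\<in>cfgs A. (?d x * u x)\<^sup>2 + (t * flip_sum u A x)\<^sup>2 / 4)"
  proof (rule sum_mono)
    fix x
    have "0 \<le> (?d x * u x - t * flip_sum u A x / 2)\<^sup>2" by simp
    then show "?d x * u x * (t * flip_sum u A x) \<le> (?d x * u x)\<^sup>2 + (t * flip_sum u A x)\<^sup>2 / 4"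
      by (simp add: power2_eq_square algebra_simps)
  qed
  also have "\<dots> = (\<Sum>x\<in>cfgs A. (?d x)\<^sup>2 * (u x)\<^sup>2) + t\<^sup>2 / 4 * (\<Sum>x\<in>cfgs A. (flip_sum u A x)\<^sup>2)"
    by (simp add: sum.distrib sum_distrib_left power_mult_distrib)
  also have "\<dots> \<le> (\<Sum>x\<in>cfgs A. (?d x)\<^sup>2 * (u x)\<^sup>2) + t\<^sup>2 * block_weight L * (\<Sum>x\<in>cfgs A. (u x)\<^sup>2)"
    using mult_left_mono[OF sum_flip_sum_square_le_block_weight[OF assms(1-4)], of "t\<^sup>2"]
    by (simp add: mult_ac)
  finally show ?thesis .
qed

lemma op_form_hermitian:
  assumes "is_state B \<sigma>"
  shows "op_form B \<sigma> v w = cnj (op_form B \<sigma> w v)"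
proof -
  have herm: "cnj (\<sigma> z y) = \<sigma> y z" if "y \<in> cfgs B" "z \<in> cfgs B" for y z
    using assms that unfolding is_state_def by metis
  have "cnj (op_form B \<sigma> w v) = (\<Sum>z\<in>cfgs B. \<Sum>y\<in>cfgs B. cnj (v y) * \<sigma> y z * w z)"
    unfolding op_form_def by (simp add: herm mult_ac cong: sum.cong)
  also have "\<dots> = op_form B \<sigma> v w"
    unfolding op_form_def by (rule sum.swap)
  finally show ?thesis by simp
qed

lemma op_form_nonneg:
  assumes "is_state B \<sigma>"
  shows "0 \<le> Re (op_form B \<sigma> v v)"
  using assms unfolding is_state_def op_form_def by blast

lemma op_form_diag_real:
  assumes "is_state B \<sigma>"
  shows "op_form B \<sigma> v v = of_real (Re (op_form B \<sigma> v v))"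
  using op_form_hermitian[OF assms, of v v] by (simp add: complex_eq_iff)

lemma op_form_expand:
  "op_form B \<sigma> (\<lambda>z. v z + c * w z) (\<lambda>z. v z + c * w z)
   = op_form B \<sigma> v v + c * op_form B \<sigma> v w + cnj c * op_form B \<sigma> w v + cnj c * c * op_form B \<sigma> w w"
  unfolding op_form_def by (simp add: algebra_simps sum.distrib sum_distrib_left)

lemma nonneg_quadratic_imp_le:
  fixes p q c :: real
  assumes nonneg: "\<And>r. 0 \<le> p - 2 * r * c + r\<^sup>2 * c * q" and "0 \<le> c" "0 \<le> q"
  shows "c \<le> p * q"
proof (cases "c = 0")
  case True
  then show ?thesis using nonneg[of 0] \<open>0 \<le> q\<close> by simp
next
  case False
  show ?thesis
  proof (cases "q = 0")
    case True
    have "0 \<le> p - 2 * ((p + 1) / (2 * c)) * c"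
      using nonneg[of "(p + 1) / (2 * c)"] True by simp
    then show ?thesis using False by (simp add: field_simps)
  next
    case False
    have "0 \<le> p - 2 * (1 / q) * c + (1 / q)\<^sup>2 * c * q"
      by (rule nonneg)
    then show ?thesis
      using False \<open>0 \<le> q\<close> by (simp add: power2_eq_square field_simps)
  qed
qed

lemma op_form_cauchy_schwarz:
  assumes "is_state B \<sigma>"
  shows "(cmod (op_form B \<sigma> v w))\<^sup>2 \<le> Re (op_form B \<sigma> v v) * Re (op_form B \<sigma> w w)"
proof (rule nonneg_quadratic_imp_le)
  let ?b = "op_form B \<sigma> v w" and ?p = "Re (op_form B \<sigma> v v)" and ?q = "Re (op_form B \<sigma> w w)"
  fix r :: real
  define c where "c = - (of_real r * cnj ?b)"
  have b2: "?b * cnj ?b = of_real ((cmod ?b)\<^sup>2)"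
    by (metis complex_norm_square)
  have "c * ?b = - of_real (r * (cmod ?b)\<^sup>2)" "cnj c * cnj ?b = - of_real (r * (cmod ?b)\<^sup>2)"
    and "cnj c * c = of_real (r\<^sup>2 * (cmod ?b)\<^sup>2)"
    unfolding c_def using b2 by (simp_all add: power2_eq_square mult_ac)
  moreover have "op_form B \<sigma> w v = cnj ?b" "op_form B \<sigma> v v = of_real ?p" "op_form B \<sigma> w w = of_real ?q"
    using op_form_hermitian[OF assms, of w v] op_form_diag_real[OF assms] by simp_all
  ultimately have "op_form B \<sigma> (\<lambda>z. v z + c * w z) (\<lambda>z. v z + c * w z)
      = of_real (?p - 2 * r * (cmod ?b)\<^sup>2 + r\<^sup>2 * (cmod ?b)\<^sup>2 * ?q)"
    unfolding op_form_expand by (simp add: algebra_simps)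
  then show "0 \<le> ?p - 2 * r * (cmod ?b)\<^sup>2 + r\<^sup>2 * (cmod ?b)\<^sup>2 * ?q"
    using op_form_nonneg[OF assms, of "\<lambda>z. v z + c * w z"] by simp
qed (use op_form_nonneg[OF assms] in auto)

lemma basis_vec_partition:
  assumes "finite A" "partition_on A L"
  shows "basis_vec U A x z = (\<Prod>B\<in>L. basis_vec U B (restr B x) (restr B z))"
  unfolding basis_vec_def prod.partition[OF assms] by (intro prod.cong refl) (simp add: restr_def)

lemma op_form_tensor_prod:
  assumes "finite A" "partition_on A L"
  shows "op_form A (tensor_prod L \<sigma>) (basis_vec U A x) (basis_vec U A y)
    = (\<Prod>B\<in>L. op_form B (\<sigma> B) (basis_vec U B (restr B x)) (basis_vec U B (restr B y)))"
proof -
  have finL: "finite L" and disj: "disjoint L" and UA: "\<Union>L = A"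
    using finite_elements[OF assms] partition_onD1[OF assms(2)] partition_onD2[OF assms(2)] by auto
  define g where "g B z' w' = cnj (basis_vec U B (restr B x) z') * \<sigma> B z' w' * basis_vec U B (restr B y) w'"
    for B z' w'
  have "op_form A (tensor_prod L \<sigma>) (basis_vec U A x) (basis_vec U A y)
      = (\<Sum>z\<in>cfgs (\<Union>L). \<Sum>w\<in>cfgs (\<Union>L). \<Prod>B\<in>L. g B (restr B z) (restr B w))"
    unfolding op_form_def UA basis_vec_partition[OF assms, of U x] basis_vec_partition[OF assms, of U y]
    by (simp add: g_def tensor_prod_def prod.distrib)
  also have "\<dots> = (\<Sum>z\<in>cfgs (\<Union>L). \<Prod>B\<in>L. \<Sum>w'\<in>cfgs B. g B (restr B z) w')"
    by (intro sum.cong refl sum_cfgs_prod_blocks[OF finL disj])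
  also have "\<dots> = (\<Prod>B\<in>L. \<Sum>z'\<in>cfgs B. \<Sum>w'\<in>cfgs B. g B z' w')"
    by (rule sum_cfgs_prod_blocks[OF finL disj])
  finally show ?thesis
    by (simp add: op_form_def g_def)
qed

locale product_state =
  fixes A :: "nat set" and L :: "nat set set" and \<sigma> :: "nat set \<Rightarrow> op"
    and U :: "bool \<Rightarrow> bool \<Rightarrow> complex"
  assumes finite_qubits: "finite A" and partition: "partition_on A L"
    and block_states: "\<And>B. B \<in> L \<Longrightarrow> is_state B (\<sigma> B)" and unitary: "unitary_qubit U"
begin

definition block_amplitude :: "nat set \<Rightarrow> (nat \<Rightarrow> bool) \<Rightarrow> real" where
  "block_amplitude B y = sqrt (Re (op_form B (\<sigma> B) (basis_vec U B y) (basis_vec U B y)))"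

definition amplitude :: "(nat \<Rightarrow> bool) \<Rightarrow> real" where
  "amplitude x = (\<Prod>B\<in>L. block_amplitude B (restr B x))"

lemma finite_blocks: "finite L"
  using finite_elements[OF finite_qubits partition] .

lemma block_subset: "B \<in> L \<Longrightarrow> B \<subseteq> A"
  using partition by (auto simp: partition_on_def)

lemma block_amplitude_square:
  "B \<in> L \<Longrightarrow> (block_amplitude B y)\<^sup>2 = Re (op_form B (\<sigma> B) (basis_vec U B y) (basis_vec U B y))"
  by (simp add: block_amplitude_def op_form_nonneg[OF block_states])

lemma block_amplitude_nonneg: "B \<in> L \<Longrightarrow> 0 \<le> block_amplitude B y"
  by (simp add: block_amplitude_def op_form_nonneg[OF block_states])

lemma amplitude_nonneg: "0 \<le> amplitude x"
  unfolding amplitude_def by (intro prod_nonneg ballI block_amplitude_nonneg)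

lemma op_form_basis_vec_diag:
  "op_form A (tensor_prod L \<sigma>) (basis_vec U A x) (basis_vec U A x) = of_real ((amplitude x)\<^sup>2)"
  unfolding op_form_tensor_prod[OF finite_qubits partition] amplitude_def power2_eq_square
    prod.distrib[symmetric] of_real_prod
  by (intro prod.cong refl)
    (metis block_amplitude_square op_form_diag_real[OF block_states] power2_eq_square)

lemma op_form_basis_vec_bound:
  "cmod (op_form A (tensor_prod L \<sigma>) (basis_vec U A x) (basis_vec U A y)) \<le> amplitude x * amplitude y"
  unfolding op_form_tensor_prod[OF finite_qubits partition] amplitude_def prod_norm[symmetric] prod.distrib[symmetric]
proof (intro prod_mono conjI)
  fix B assume B: "B \<in> L"
  let ?f = "op_form B (\<sigma> B) (basis_vec U B (restr B x)) (basis_vec U B (restr B y))"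
  have "(cmod ?f)\<^sup>2 \<le> (block_amplitude B (restr B x) * block_amplitude B (restr B y))\<^sup>2"
    using op_form_cauchy_schwarz[OF block_states[OF B]] by (simp add: power_mult_distrib block_amplitude_square B)
  then show "cmod ?f \<le> block_amplitude B (restr B x) * block_amplitude B (restr B y)"
    by (rule power2_le_imp_le) (simp add: block_amplitude_nonneg B)
qed simp

lemma sum_amplitude_square: "(\<Sum>x\<in>cfgs A. (amplitude x)\<^sup>2) = 1"
proof -
  have UA: "\<Union>L = A" and disj: "disjoint L"
    using partition_onD1[OF partition] partition_onD2[OF partition] by auto
  have "(\<Sum>x\<in>cfgs A. (amplitude x)\<^sup>2) = (\<Prod>B\<in>L. \<Sum>y\<in>cfgs B. (block_amplitude B y)\<^sup>2)"
    unfolding amplitude_def prod_power_distrib UA[symmetric] by (rule sum_cfgs_prod_blocks[OF finite_blocks disj])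
  also have "\<dots> = (\<Prod>B\<in>L. Re (op_trace B (\<sigma> B)))"
    using trace_eq_sum_op_form[OF finite_subset[OF block_subset finite_qubits] unitary]
    by (intro prod.cong refl) (simp add: block_amplitude_square)
  also have "\<dots> = 1"
    using block_states by (simp add: is_state_def)
  finally show ?thesis .
qed

lemma spin_mult_amplitude_flip:
  assumes "i \<in> A"
  shows "spin (x i) * amplitude (flip i x) = (\<Prod>B\<in>L.
    if i \<in> B then spin (restr B x i) * block_amplitude B (flip i (restr B x)) else block_amplitude B (restr B x))"
proof -
  obtain Bi where Bi: "Bi \<in> L" "i \<in> Bi"
    using assms partition_onD1[OF partition] by blast
  have "i \<in> B \<longleftrightarrow> B = Bi" if "B \<in> L" for B
    using partition_onD2[OF partition] Bi that by (auto simp: disjoint_def disjnt_def)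
  then have "(\<Prod>B\<in>L. if i \<in> B then spin (x i) else 1) = (spin (x i) :: real)"
    using Bi finite_blocks by (simp cong: prod.cong)
  then have "spin (x i) * amplitude (flip i x)
      = (\<Prod>B\<in>L. (if i \<in> B then spin (x i) else 1) * block_amplitude B (restr B (flip i x)))"
    by (simp add: amplitude_def prod.distrib)
  also have "\<dots> = (\<Prod>B\<in>L.
      if i \<in> B then spin (restr B x i) * block_amplitude B (flip i (restr B x)) else block_amplitude B (restr B x))"
    by (intro prod.cong refl) (simp add: restr_flip)
  finally show ?thesis .
qed

lemma sum_spin_flip_block_amplitude:
  assumes "i \<in> B"
  shows "(\<Sum>y\<in>cfgs B. spin (y i) * block_amplitude B (flip i y) * block_amplitude B y) = 0"
proof -
  let ?S = "\<Sum>y\<in>cfgs B. spin (y i) * block_amplitude B (flip i y) * block_amplitude B y"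
  have "?S = (\<Sum>y\<in>cfgs B. spin (flip i y i) * block_amplitude B (flip i (flip i y)) * block_amplitude B (flip i y))"
    by (rule sum_cfgs_flip[OF assms, symmetric])
  also have "\<dots> = - ?S"
    by (simp add: sum_negf[symmetric] mult_ac)
  finally show ?thesis by simp
qed

text \<open>The flip amplitude of a site factorizes over the blocks; summing over a block that
  contains only one of the two sites gives zero by the antisymmetry of the flip.\<close>
lemma amplitude_flips_uncorrelated: "flips_uncorrelated A L amplitude"
  unfolding flips_uncorrelated_def
proof (intro ballI impI)
  fix B0 B1 i j assume B: "B0 \<in> L" "B1 \<in> L" "B0 \<noteq> B1" and i: "i \<in> B0" and j: "j \<in> B1"
  have UA: "\<Union>L = A" and disj: "disjoint L"
    using partition_onD1[OF partition] partition_onD2[OF partition] by auto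
  have "j \<notin> B0"
    using disj B j by (auto simp: disjoint_def disjnt_def)
  define g where "g B y = (if i \<in> B then spin (y i) * block_amplitude B (flip i y) else block_amplitude B y)
    * (if j \<in> B then spin (y j) * block_amplitude B (flip j y) else block_amplitude B y)" for B y
  have "(\<Sum>x\<in>cfgs A. spin (x i) * amplitude (flip i x) * (spin (x j) * amplitude (flip j x)))
      = (\<Sum>x\<in>cfgs (\<Union>L). \<Prod>B\<in>L. g B (restr B x))"
    using B i j block_subset unfolding UA
    by (simp add: spin_mult_amplitude_flip g_def prod.distrib subset_iff)
  also have "\<dots> = (\<Prod>B\<in>L. \<Sum>y\<in>cfgs B. g B y)"
    by (rule sum_cfgs_prod_blocks[OF finite_blocks disj])
  also have "\<dots> = 0"
    using \<open>j \<notin> B0\<close> sum_spin_flip_block_amplitude[OF i] i B(1) finite_blocks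
    by (auto simp: g_def mult_ac intro!: prod_zero bexI[of _ B0])
  finally show "(\<Sum>x\<in>cfgs A. spin (x i) * amplitude (flip i x) * (spin (x j) * amplitude (flip j x))) = 0" .
qed

end

definition expect_on :: "nat set \<Rightarrow> op \<Rightarrow> op \<Rightarrow> real" where
  "expect_on A \<rho> M = Re (op_trace A (op_mult A \<rho> M))"

text \<open>The witness is affine in \<open>\<rho>\<close>; for \<open>\<mu> = \<langle>J\<^sub>n\<rangle>\<close> it equals
  \<open>(\<Delta>J\<^sub>n)\<^sup>2 - t \<langle>J\<^sub>m\<rangle>\<close>.\<close>
definition squeezing_witness :: "nat set \<Rightarrow> real^3 \<Rightarrow> real^3 \<Rightarrow> real \<Rightarrow> real \<Rightarrow> op \<Rightarrow> real" where
  "squeezing_witness A n m \<mu> t \<rho> = expect_on A \<rho> (op_mult A (J_on A n) (J_on A n))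
     - 2 * \<mu> * expect_on A \<rho> (J_on A n) + \<mu>\<^sup>2 - t * expect_on A \<rho> (J_on A m)"

context product_state
begin

lemma expect_J_on_product:
  assumes "pauli_frame n m U"
  shows "expect_on A (tensor_prod L \<sigma>) (J_on A n) = (\<Sum>x\<in>cfgs A. magnetization A x * (amplitude x)\<^sup>2)"
    and "expect_on A (tensor_prod L \<sigma>) (op_mult A (J_on A n) (J_on A n))
      = (\<Sum>x\<in>cfgs A. (magnetization A x)\<^sup>2 * (amplitude x)\<^sup>2)"
  unfolding expect_on_def traces_in_product_basis[OF finite_qubits assms] op_form_basis_vec_diag
  by (simp_all flip: of_real_mult of_real_power)

lemma abs_expect_J_on_flip_product_le:
  assumes "pauli_frame n m U"
  shows "\<bar>expect_on A (tensor_prod L \<sigma>) (J_on A m)\<bar>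
    \<le> 1/2 * (\<Sum>x\<in>cfgs A. \<Sum>i\<in>A. amplitude x * amplitude (flip i x))"
proof -
  let ?f = "\<lambda>x i. op_form A (tensor_prod L \<sigma>) (basis_vec U A x) (basis_vec U A (flip i x))"
  have "\<bar>expect_on A (tensor_prod L \<sigma>) (J_on A m)\<bar> \<le> cmod (1/2 * (\<Sum>x\<in>cfgs A. \<Sum>i\<in>A. ?f x i))"
    unfolding expect_on_def traces_in_product_basis[OF finite_qubits assms] by (rule abs_Re_le_cmod)
  also have "\<dots> \<le> 1/2 * (\<Sum>x\<in>cfgs A. \<Sum>i\<in>A. cmod (?f x i))"
    by (simp add: norm_mult) (rule order_trans[OF norm_sum sum_mono[OF norm_sum]])
  also have "\<dots> \<le> 1/2 * (\<Sum>x\<in>cfgs A. \<Sum>i\<in>A. amplitude x * amplitude (flip i x))"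
    by (intro mult_left_mono sum_mono op_form_basis_vec_bound) simp_all
  finally show ?thesis .
qed

lemma squeezing_witness_product_lower_bound:
  assumes "pauli_frame n m U"
  shows "- t\<^sup>2 * block_weight L \<le> squeezing_witness A n m \<mu> t (tensor_prod L \<sigma>)"
proof -
  let ?P = "tensor_prod L \<sigma>" and ?u = amplitude
  have "(\<Sum>x\<in>cfgs A. (magnetization A x - \<mu>)\<^sup>2 * (?u x)\<^sup>2)
      = (\<Sum>x\<in>cfgs A. (magnetization A x)\<^sup>2 * (?u x)\<^sup>2) - 2 * \<mu> * (\<Sum>x\<in>cfgs A. magnetization A x * (?u x)\<^sup>2)
        + \<mu>\<^sup>2 * (\<Sum>x\<in>cfgs A. (?u x)\<^sup>2)"
    by (simp add: power2_diff algebra_simps sum.distrib sum_subtractf sum_distrib_left)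
  then have "expect_on A ?P (op_mult A (J_on A n) (J_on A n)) - 2 * \<mu> * expect_on A ?P (J_on A n) + \<mu>\<^sup>2
      = (\<Sum>x\<in>cfgs A. (magnetization A x - \<mu>)\<^sup>2 * (?u x)\<^sup>2)"
    by (simp add: expect_J_on_product[OF assms] sum_amplitude_square)
  moreover have "t * expect_on A ?P (J_on A m) \<le> \<bar>t\<bar> / 2 * (\<Sum>x\<in>cfgs A. \<Sum>i\<in>A. ?u x * ?u (flip i x))"
    using mult_left_mono[OF abs_expect_J_on_flip_product_le[OF assms], of "\<bar>t\<bar>"]
    by (simp add: abs_mult[symmetric])
  moreover have "\<bar>t\<bar> / 2 * (\<Sum>x\<in>cfgs A. \<Sum>i\<in>A. ?u x * ?u (flip i x))
      \<le> (\<Sum>x\<in>cfgs A. (magnetization A x - \<mu>)\<^sup>2 * (?u x)\<^sup>2) + t\<^sup>2 * block_weight L"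
    using flip_correlation_bound[OF finite_qubits partition _ amplitude_flips_uncorrelated, of "\<bar>t\<bar>" \<mu>]
    by (simp add: amplitude_nonneg sum_amplitude_square)
  ultimately show ?thesis
    unfolding squeezing_witness_def by linarith
qed

end

lemma expect_on_mixture:
  assumes "\<forall>x\<in>cfgs A. \<forall>y\<in>cfgs A. \<rho> x y = (\<Sum>k<K. complex_of_real (q k) * \<rho>s k x y)"
  shows "expect_on A \<rho> M = (\<Sum>k<K. q k * expect_on A (\<rho>s k) M)"
proof -
  have "op_trace A (op_mult A \<rho> M) = (\<Sum>k<K. complex_of_real (q k) * op_trace A (op_mult A (\<rho>s k) M))"
    using assms
    by (simp add: op_trace_def op_mult_def sum_distrib_left sum_distrib_right mult_ac
        sum.swap[of _ "{..<K}"] cong: sum.cong)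
  then show ?thesis
    by (simp add: expect_on_def)
qed

lemma squeezing_witness_mixture_lower_bound:
  assumes "\<forall>x\<in>cfgs A. \<forall>y\<in>cfgs A. \<rho> x y = (\<Sum>k<K. complex_of_real (q k) * \<rho>s k x y)"
    and "\<forall>k<K. 0 \<le> q k" "(\<Sum>k<K. q k) = 1"
    and "\<forall>k<K. c \<le> squeezing_witness A n m \<mu> t (\<rho>s k)"
  shows "c \<le> squeezing_witness A n m \<mu> t \<rho>"
proof -
  have "squeezing_witness A n m \<mu> t \<rho> = (\<Sum>k<K. q k * squeezing_witness A n m \<mu> t (\<rho>s k))"
    using assms(3)
    by (simp add: squeezing_witness_def expect_on_mixture[OF assms(1)] algebra_simps sum.distrib
        sum_subtractf sum_distrib_left flip: sum_distrib_right)
  also have "\<dots> \<ge> (\<Sum>k<K. q k * c)"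
    using assms(2,4) by (intro sum_mono mult_left_mono) auto
  finally show ?thesis
    using assms(3) by (simp flip: sum_distrib_right)
qed

section \<open>Block sizes of a partition of bounded Dyson rank\<close>

lemma sum_square_le_mult_sum:
  fixes e :: "'a \<Rightarrow> 'b::linordered_semiring"
  assumes "\<And>x. x \<in> S \<Longrightarrow> 0 \<le> e x \<and> e x \<le> b"
  shows "(\<Sum>x\<in>S. e x * e x) \<le> b * (\<Sum>x\<in>S. e x)"
  unfolding sum_distrib_left using assms by (intro sum_mono mult_right_mono) auto

text \<open>\<open>F + 1\<close> is the size of the largest block, \<open>R\<close> and \<open>X\<close> are the sums of \<open>size - 1\<close> and of its
  square over the remaining blocks.\<close>
lemma dyson_square_bound_core:
  fixes F R X s :: int
  assumes "0 \<le> F" "0 \<le> R" "X \<le> F * R" "X \<le> R * R" "2 * F + R + 1 \<le> s"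
    and "F = 0 \<Longrightarrow> R = 0" and "F = 1 \<Longrightarrow> R = 1 \<Longrightarrow> 5 \<le> s"
  shows "4 * F * F + 4 * X + 4 * F + 4 * R + 1 \<le> s * s"
proof -
  have s_sq: "a * a \<le> s * s" if "0 \<le> a" "a \<le> s" for a
    using mult_mono[OF that(2) that(2)] that by simp
  show ?thesis
  proof (cases "R = 1")
    case False
    then have "2 * R \<le> R * R"
      using \<open>0 \<le> R\<close> by (cases "R = 0") (simp_all add: mult_right_mono)
    then show ?thesis
      using s_sq[of "2 * F + R + 1"] assms(1-5) by (simp add: algebra_simps)
  next
    case True
    then have "1 \<le> F" "X \<le> 1"
      using assms(1,4,6) by force+
    show ?thesis
    proof (cases "F = 1")
      case True
      then show ?thesis
        using s_sq[of 5] assms(7) \<open>R = 1\<close> \<open>X \<le> 1\<close> by simp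
    next
      case False
      then show ?thesis
        using s_sq[of "2 * F + 2"] assms(5) \<open>R = 1\<close> \<open>1 \<le> F\<close> \<open>X \<le> 1\<close> by (simp add: algebra_simps)
    qed
  qed
qed

lemma four_sum_square_le_dyson:
  fixes c :: "'a \<Rightarrow> nat" and r :: int
  assumes "finite L" "L \<noteq> {}" "\<And>B. B \<in> L \<Longrightarrow> 0 < c B"
    and dyson: "int (Max (c ` L)) - int (card L) \<le> r" and r4: "r \<noteq> 4 - int (sum c L)"
  defines "N \<equiv> int (sum c L)"
  shows "4 * (\<Sum>B\<in>L. int (c B) * int (c B)) \<le> (N + r) * (N + r) + 4 * N - 1"
proof -
  obtain B0 where B0: "B0 \<in> L" "c B0 = Max (c ` L)"
    using Max_in[of "c ` L"] assms(1,2) by (metis (mono_tags) finite_imageI image_iff image_is_empty)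
  define e where "e B = int (c B) - 1" for B
  define F R X where "F = e B0" "R = (\<Sum>B\<in>L - {B0}. e B)" "X = (\<Sum>B\<in>L - {B0}. e B * e B)"
  have e_bounds: "0 \<le> e B \<and> e B \<le> F" if "B \<in> L" for B
  proof -
    have "int (c B) \<le> int (Max (c ` L))"
      using assms(1) that by simp
    then show ?thesis
      using assms(3)[OF that] unfolding e_def F_R_X_def B0(2) by linarith
  qed
  have e_le_R: "e B \<le> R" if "B \<in> L - {B0}" for B
    unfolding F_R_X_def using assms(1) that e_bounds by (intro member_le_sum) auto
  have sums: "(\<Sum>B\<in>L. e B) = F + R" "(\<Sum>B\<in>L. e B * e B) = F * F + X"
    using sum.remove[OF assms(1) B0(1)] by (simp_all add: F_R_X_def)
  then have N: "N = F + R + int (card L)"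
    by (simp add: N_def e_def sum_subtractf)
  have "(\<Sum>B\<in>L. int (c B) * int (c B)) = (\<Sum>B\<in>L. e B * e B + 2 * e B + 1)"
    by (simp add: e_def algebra_simps)
  then have sq: "(\<Sum>B\<in>L. int (c B) * int (c B)) = F * F + X + 2 * (F + R) + int (card L)"
    using sums by (simp add: sum.distrib flip: sum_distrib_left)
  have "4 * F * F + 4 * X + 4 * F + 4 * R + 1 \<le> (N + r) * (N + r)"
  proof (rule dyson_square_bound_core)
    show "0 \<le> F" "0 \<le> R"
      using e_bounds B0(1) unfolding F_R_X_def by (auto intro: sum_nonneg)
    have "X \<le> F * (\<Sum>B\<in>L - {B0}. e B)" "X \<le> R * (\<Sum>B\<in>L - {B0}. e B)"
      unfolding F_R_X_def(3) using e_bounds e_le_R by (auto intro!: sum_square_le_mult_sum)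
    then show "X \<le> F * R" "X \<le> R * R"
      by (simp_all only: F_R_X_def(2)[symmetric])
    show "2 * F + R + 1 \<le> N + r"
      using dyson N B0(2) by (simp add: F_R_X_def e_def)
    show "R = 0" if "F = 0"
      unfolding F_R_X_def using e_bounds that by (intro sum.neutral) (auto intro: order.antisym)
    show "5 \<le> N + r" if "F = 1" "R = 1"
      using dyson r4 N B0(2) that by (simp add: F_R_X_def e_def N_def)
  qed
  then show ?thesis
    unfolding sq using N by (simp add: algebra_simps)
qed

lemma partition_sum_card:
  assumes "finite A" "partition_on A L"
  shows "(\<Sum>B\<in>L. card B) = card A"
  using sum.partition[OF assms, of "\<lambda>_. 1::nat"] by simp

lemma block_weight_le_dyson:
  assumes "is_partition N L" "N \<ge> 1" "dyson_part L \<le> r" "r \<noteq> 4 - int N"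
  shows "block_weight L \<le> ((real N + of_int r)\<^sup>2 + 12 * real N - 1) / 32"
proof -
  have part: "partition_on {1..N} L"
    using assms(1) by (simp add: is_partition_def)
  have "L \<noteq> {}"
    using partition_onD1[OF part] assms(2) by auto
  moreover have "0 < card B" if "B \<in> L" for B
    using partition_onD3[OF part] that finite_subset[of B "{1..N}"] partition_onD1[OF part]
    by (auto simp: card_gt_0_iff)
  moreover have N: "sum card L = N"
    using partition_sum_card[OF _ part] by simp
  ultimately have "4 * (\<Sum>B\<in>L. int (card B) * int (card B)) \<le> (int N + r) * (int N + r) + 4 * int N - 1"
    using four_sum_square_le_dyson[of L card r] finite_elements[OF _ part] assms(3,4)
    by (simp add: dyson_part_def)
  then have "real_of_int (4 * (\<Sum>B\<in>L. int (card B) * int (card B)))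
      \<le> real_of_int ((int N + r) * (int N + r) + 4 * int N - 1)"
    by (simp only: of_int_le_iff)
  then have "4 * (\<Sum>B\<in>L. real (card B) * real (card B)) \<le> (real N + of_int r) * (real N + of_int r) + 4 * real N - 1"
    by simp
  moreover have "(\<Sum>B\<in>L. real (card B)) = real N"
    using N by (metis of_nat_sum)
  moreover have "block_weight L
      = ((\<Sum>B\<in>L. real (card B) * real (card B)) + 2 * (\<Sum>B\<in>L. real (card B))) / 8"
    by (simp add: block_weight_def sum_divide_distrib[symmetric] sum.distrib sum_distrib_left algebra_simps)
  ultimately show ?thesis
    by (simp add: power2_eq_square)
qed

lemma separable_squeezing_witness_lower_bound:
  assumes "separable N L \<rho>" "is_partition N L" "pauli_frame n m U"
  shows "- t\<^sup>2 * block_weight L \<le> squeezing_witness {1..N} n m \<mu> t \<rho>"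
proof -
  obtain K :: nat and p \<sigma> where p: "\<forall>k<K. 0 \<le> p k" "(\<Sum>k<K. p k) = 1"
    and states: "\<forall>k<K. \<forall>B\<in>L. is_state B (\<sigma> k B)"
    and mix: "\<forall>x\<in>cfgs {1..N}. \<forall>y\<in>cfgs {1..N}.
      \<rho> x y = (\<Sum>k<K. complex_of_real (p k) * tensor_prod L (\<sigma> k) x y)"
    using assms(1) unfolding separable_def by blast
  show ?thesis
  proof (rule squeezing_witness_mixture_lower_bound[OF mix p], intro allI impI)
    fix k assume "k < K"
    then interpret product_state "{1..N}" L "\<sigma> k" U
      using assms(2,3) states by unfold_locales (auto simp: is_partition_def pauli_frame_unitary)
    show "- t\<^sup>2 * block_weight L \<le> squeezing_witness {1..N} n m \<mu> t (tensor_prod L (\<sigma> k))"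
      by (rule squeezing_witness_product_lower_bound[OF assms(3)])
  qed
qed

lemma dyson_rank_squeezing_witness_lower_bound:
  assumes "dyson_rank_le N r \<rho>" "N \<ge> 1" "r \<noteq> 4 - int N" "pauli_frame n m U"
  shows "- t\<^sup>2 * ((real N + of_int r)\<^sup>2 + 12 * real N - 1) / 32 \<le> squeezing_witness {1..N} n m \<mu> t \<rho>"
proof -
  obtain K :: nat and q \<Lambda> \<rho>s where q: "\<forall>k<K. 0 \<le> q k" "(\<Sum>k<K. q k) = 1"
    and parts: "\<forall>k<K. is_partition N (\<Lambda> k) \<and> dyson_part (\<Lambda> k) \<le> r \<and> separable N (\<Lambda> k) (\<rho>s k)"
    and mix: "\<forall>x\<in>cfgs {1..N}. \<forall>y\<in>cfgs {1..N}. \<rho> x y = (\<Sum>k<K. complex_of_real (q k) * \<rho>s k x y)"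
    using assms(1) unfolding dyson_rank_le_def by blast
  show ?thesis
  proof (rule squeezing_witness_mixture_lower_bound[OF mix q], intro allI impI)
    fix k assume "k < K"
    then have bw: "block_weight (\<Lambda> k) \<le> ((real N + of_int r)\<^sup>2 + 12 * real N - 1) / 32"
      using block_weight_le_dyson[OF _ assms(2) _ assms(3)] parts by blast
    then have "- t\<^sup>2 * ((real N + of_int r)\<^sup>2 + 12 * real N - 1) / 32 \<le> - t\<^sup>2 * block_weight (\<Lambda> k)"
      using mult_left_mono[OF bw zero_le_power2[of t]] by simp
    also have "\<dots> \<le> squeezing_witness {1..N} n m \<mu> t (\<rho>s k)"
      using \<open>k < K\<close> parts separable_squeezing_witness_lower_bound[OF _ _ assms(4)] by blast
    finally show "- t\<^sup>2 * ((real N + of_int r)\<^sup>2 + 12 * real N - 1) / 32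
        \<le> squeezing_witness {1..N} n m \<mu> t (\<rho>s k)" .
  qed
qed

lemma ratio_bound_from_quadratic:
  fixes N V a Q :: real
  assumes "0 \<le> N" "0 < Q" "a \<noteq> 0" and quadratic: "\<And>t. - t\<^sup>2 * Q / 32 \<le> V - t * a"
  shows "8 * N / Q \<le> N * V / a\<^sup>2"
proof -
  have "- (16 * a / Q)\<^sup>2 * Q / 32 \<le> V - 16 * a / Q * a"
    by (rule quadratic)
  then have "8 * a\<^sup>2 \<le> V * Q"
    using assms(2) by (simp add: power2_eq_square field_simps)
  then have "8 * N * a\<^sup>2 \<le> N * V * Q"
    using mult_left_mono[OF _ assms(1)] by (metis mult.assoc mult.commute)
  then show ?thesis
    using assms(2,3) by (simp add: field_simps)
qed

theorem mainTheorem7: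
  fixes N :: nat and r :: int and \<rho> :: op and n m :: "real^3"
  assumes "N \<ge> 1"
    and "- (int N - 1) \<le> r" and "r \<le> int N - 1"
    and "r \<noteq> int N - 2" and "r \<noteq> - (int N - 2)" and "r \<noteq> 4 - int N"
    and "dyson_rank_le N r \<rho>"
    and "norm n = 1" and "norm m = 1" and "n \<bullet> m = 0"
    and "expect N \<rho> (J_op N m) \<noteq> 0"
  shows "real N * variance N \<rho> (J_op N n) / (expect N \<rho> (J_op N m))^2
           \<ge> 8 * real N / ((real N + of_int r)^2 + 12 * real N - 1)"
proof -
  obtain U where frame: "pauli_frame n m U"
    using pauli_frame_exists assms(8-10) by blast
  have "- t\<^sup>2 * ((real N + of_int r)\<^sup>2 + 12 * real N - 1) / 32
      \<le> variance N \<rho> (J_op N n) - t * expect N \<rho> (J_op N m)" for t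
    using dyson_rank_squeezing_witness_lower_bound[OF assms(7,1,6) frame, of t "expect N \<rho> (J_op N n)"]
    by (simp add: squeezing_witness_def variance_def expect_def expect_on_def J_op_eq_J_on power2_eq_square)
  moreover have "0 < (real N + of_int r)\<^sup>2 + 12 * real N - 1"
    using assms(1) zero_le_power2[of "real N + of_int r"] by linarith
  ultimately show ?thesis
    using ratio_bound_from_quadratic assms(11) by auto
qed

end
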